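(* There is an absolute constant $c>0$ such that the following holds. Let $\mathcal{C}$ be a class of functions $\{\pm1\}^d\to\{\pm1\}$, $\mathcal{V}\subseteq2^{[d]}$ a nonempty collection of subsets of features, $\varepsilon\in(0,1/2)$, $\delta\in(0,1)$, and let $n,m\in\mathbb{N}$ satisfy $$m\ \ge\ c\,\mathrm{VC}(\mathcal{C}\mid\mathcal{V})\frac{\log(1/\varepsilon)}{\varepsilon},\qquad nm\ \ge\ c\,\frac{\log|\mathcal{V}|+\log(1/\delta)}{\varepsilon}.$$ Then $\delta_{\mathrm{gen}}(\mathcal{C},\mathcal{V},n,m,\varepsilon)\le\delta$.
   Context: For $f:\{\pm1\}^d\to\{\pm1\}$, $\mathrm{Rel}(f)=\{j\in[d]:\exists v\in\{\pm1\}^d,\ f(v|_{v_j=+1})\neq f(v|_{v_j=-1})\}$, where $v|_{v_j=b}$ is $v$ with coordinate $j$ set to $b$. For $V\subseteq[d]$, $(\mathcal{C}\mid V)=\{f\in\mathcal{C}:\mathrm{Rel}(f)\subseteq V\}$, and $\mathrm{VC}(\mathcal{C}\mid\mathcal{V})=\max_{V\in\mathcal{V}}\mathrm{VC}(\mathcal{C}\mid V)$, where $\mathrm{VC}$ is the usual Vapnik–Chervonenkis dimension. For distributions $D^{(1)},\dots,D^{(n)}$ over $\{\pm1\}^d\times\{\pm1\}$, $\delta_{\mathrm{gen}}(\mathcal{C},\mathcal{V},n,m,\varepsilon,D^{(1)},\dots,D^{(n)})$ is the probability, over independent samples $S^{(i)}\sim(D^{(i)})^m$, $i\in[n]$, that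 there exist $h^{(1)},\dots,h^{(n)}\in\mathcal{C}$ with $\bigcup_i\mathrm{Rel}(h^{(i)})\in\mathcal{V}$ such that $\frac{1}{nm}\sum_{i}\sum_{(x,y)\in S^{(i)}}\mathbf{1}[h^{(i)}(x)\neq y]\le\varepsilon$ but $\frac1n\sum_i\Pr_{(x,y)\sim D^{(i)}}[h^{(i)}(x)\neq y]\ge4\varepsilon$. Then $\delta_{\mathrm{gen}}(\mathcal{C},\mathcal{V},n,m,\varepsilon)$ is the supremum of this quantity over all choices of $D^{(1)},\dots,D^{(n)}$. *)

theory Defs
  imports "HOL-Probability.Probability"
begin

text \<open>Points of the hypercube {+-1}^d are int lists of length d with entries in {-1,1};
  coordinates are indexed 0..d-1 (list indices). Labels are ints in {-1,1}.\<close>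

definition cube :: "nat \<Rightarrow> int list set" where
  "cube d = {v. length v = d \<and> set v \<subseteq> {-1, 1}}"

definition Rel :: "nat \<Rightarrow> (int list \<Rightarrow> int) \<Rightarrow> nat set" where
  "Rel d f = {j. j < d \<and> (\<exists>v\<in>cube d. f (v[j := 1]) \<noteq> f (v[j := -1]))}"

definition restrict_class :: "nat \<Rightarrow> (int list \<Rightarrow> int) set \<Rightarrow> nat set \<Rightarrow> (int list \<Rightarrow> int) set" where
  "restrict_class d C V = {f \<in> C. Rel d f \<subseteq> V}"

definition shatters :: "nat \<Rightarrow> (int list \<Rightarrow> int) set \<Rightarrow> int list set \<Rightarrow> bool" where
  "shatters d H S \<longleftrightarrow> S \<subseteq> cube d \<and>
     (\<forall>T\<subseteq>S. \<exists>h\<in>H. \<forall>x\<in>S. (h x = 1 \<longleftrightarrow> x \<in> T))"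

text \<open>VC dimension (on the domain cube d); 0 if nothing is shattered (e.g. empty class).\<close>
definition VC :: "nat \<Rightarrow> (int list \<Rightarrow> int) set \<Rightarrow> nat" where
  "VC d H = Sup {card S | S. shatters d H S}"

definition VC_coll :: "nat \<Rightarrow> (int list \<Rightarrow> int) set \<Rightarrow> nat set set \<Rightarrow> nat" where
  "VC_coll d C \<V> = Max ((\<lambda>V. VC d (restrict_class d C V)) ` \<V>)"

definition sample_pmf :: "nat \<Rightarrow> nat \<Rightarrow> (nat \<Rightarrow> (int list \<times> int) pmf) \<Rightarrow> (nat \<times> nat \<Rightarrow> int list \<times> int) pmf" where
  "sample_pmf n m D = Pi_pmf ({..<n} \<times> {..<m}) ([], 0) (\<lambda>(i, j). D i)"

definition emp_err :: "nat \<Rightarrow> nat \<Rightarrow> (nat \<Rightarrow> int list \<Rightarrow> int) \<Rightarrow> (nat \<times> nat \<Rightarrow> int list \<times> int) \<Rightarrow> real" where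
  "emp_err n m h s = (1 / (real n * real m)) *
     (\<Sum>i<n. \<Sum>j<m. if h i (fst (s (i, j))) \<noteq> snd (s (i, j)) then 1 else 0)"

definition pop_err :: "nat \<Rightarrow> (nat \<Rightarrow> (int list \<times> int) pmf) \<Rightarrow> (nat \<Rightarrow> int list \<Rightarrow> int) \<Rightarrow> real" where
  "pop_err n D h = (1 / real n) * (\<Sum>i<n. measure_pmf.prob (D i) {(x, y). h i x \<noteq> y})"

definition bad_event :: "nat \<Rightarrow> (int list \<Rightarrow> int) set \<Rightarrow> nat set set \<Rightarrow> nat \<Rightarrow> nat \<Rightarrow> real
    \<Rightarrow> (nat \<Rightarrow> (int list \<times> int) pmf) \<Rightarrow> (nat \<times> nat \<Rightarrow> int list \<times> int) set" where
  "bad_event d C \<V> n m \<epsilon> D = {s. \<exists>h :: nat \<Rightarrow> int list \<Rightarrow> int.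
      (\<forall>i<n. h i \<in> C) \<and> (\<Union>i<n. Rel d (h i)) \<in> \<V> \<and>
      emp_err n m h s \<le> \<epsilon> \<and> pop_err n D h \<ge> 4 * \<epsilon>}"

definition valid_dists :: "nat \<Rightarrow> nat \<Rightarrow> (nat \<Rightarrow> (int list \<times> int) pmf) set" where
  "valid_dists d n = {D. \<forall>i<n. set_pmf (D i) \<subseteq> cube d \<times> {-1, 1}}"

definition delta_gen_D :: "nat \<Rightarrow> (int list \<Rightarrow> int) set \<Rightarrow> nat set set \<Rightarrow> nat \<Rightarrow> nat \<Rightarrow> real
    \<Rightarrow> (nat \<Rightarrow> (int list \<times> int) pmf) \<Rightarrow> real" where
  "delta_gen_D d C \<V> n m \<epsilon> D = measure_pmf.prob (sample_pmf n m D) (bad_event d C \<V> n m \<epsilon> D)"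

definition delta_gen :: "nat \<Rightarrow> (int list \<Rightarrow> int) set \<Rightarrow> nat set set \<Rightarrow> nat \<Rightarrow> nat \<Rightarrow> real \<Rightarrow> real" where
  "delta_gen d C \<V> n m \<epsilon> = (SUP D \<in> valid_dists d n. delta_gen_D d C \<V> n m \<epsilon> D)"

end

theory Submission
  imports Defs
begin

text \<open>
  Symmetrization with a ghost sample. If a tuple of hypotheses has few empirical errors
  although its population error is at least \<open>4\<epsilon>\<close>, then by a Chernoff bound a second,
  independent sample sees at least twice as many errors with probability at least \<open>1/2\<close>.
  Conditioned on both samples, swapping each pair of examples with probability \<open>1/2\<close> makes
  such an imbalance exponentially unlikely, and only the error patterns of the hypotheses on
  the \<open>2m\<close> points of each task matter; by Sauer--Shelah there are at most
  \<open>(e\<cdot>2m/k)\<^sup>k\<close> of them per task, where \<open>k\<close> is the VC dimension of the class restricted to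
  one feature set \<open>V\<close>. A union bound over \<open>\<V>\<close> finishes the proof. When that VC dimension
  is \<open>0\<close> all hypotheses agree on the cube and a single Chernoff bound suffices.
\<close>

section \<open>Probability mass functions\<close>

lemma prob_bind_pmf:
  "measure_pmf.prob (bind_pmf M N) X = measure_pmf.expectation M (\<lambda>x. measure_pmf.prob (N x) X)"
proof -
  have "ennreal (measure_pmf.prob (bind_pmf M N) X) = (\<integral>\<^sup>+x. emeasure (N x) X \<partial>M)"
    by (simp add: measure_pmf.emeasure_eq_measure[symmetric])
  also have "\<dots> = (\<integral>\<^sup>+x. ennreal (measure_pmf.prob (N x) X) \<partial>M)"
    by (simp add: measure_pmf.emeasure_eq_measure)
  also have "\<dots> = ennreal (measure_pmf.expectation M (\<lambda>x. measure_pmf.prob (N x) X))"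
    by (intro nn_integral_eq_integral measure_pmf.integrable_const_bound[where B=1]) auto
  finally show ?thesis
    by (subst (asm) ennreal_inj) (auto intro: Bochner_Integration.integral_nonneg)
qed

lemma prob_pair_pmf:
  "measure_pmf.prob (pair_pmf A B) X = measure_pmf.expectation A (\<lambda>x. measure_pmf.prob B {y. (x, y) \<in> X})"
proof -
  have "pair_pmf A B = bind_pmf A (\<lambda>x. map_pmf (Pair x) B)"
    by (simp add: pair_pmf_def map_pmf_def)
  thus ?thesis by (simp only: prob_bind_pmf measure_map_pmf vimage_def)
qed

lemma two_powr_le_exp: "(0::real) \<le> t \<Longrightarrow> 2 powr t \<le> exp (25/36 * t)"
  using mult_left_mono[OF ln2_le_25_over_36, of t] by (simp add: powr_def mult.commute)

text \<open>Chernoff's lower tail, via Markov's inequality applied to \<open>2\<^sup>-\<^sup>X\<close>.\<close>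
lemma prob_Pi_pmf_count_le:
  fixes Q :: "'k \<Rightarrow> 'b pmf" and g :: "'k \<Rightarrow> 'b \<Rightarrow> bool"
  assumes fin: "finite I"
  shows "measure_pmf.prob (Pi_pmf I dflt Q) {s. (\<Sum>k\<in>I. if g k (s k) then 1 else 0::real) \<le> a}
     \<le> 2 powr a * exp (-(\<Sum>k\<in>I. measure_pmf.prob (Q k) {b. g k b}) / 2)"
proof -
  let ?M = "Pi_pmf I dflt Q"
  define X where "X s = (\<Sum>k\<in>I. if g k (s k) then 1 else 0::real)" for s
  define u where "u s = (\<Prod>k\<in>I. if g k (s k) then 1/2 else 1::real)" for s
  have u_eq: "u s = 2 powr (- X s)" for s
    unfolding u_def X_def sum_negf[symmetric]
    by (subst powr_sum) (auto intro!: prod.cong simp: powr_minus_divide)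
  have "measure_pmf.prob ?M {s. X s \<le> a} = measure_pmf.prob ?M {s \<in> space ?M. u s \<ge> 2 powr (-a)}"
    by (simp add: u_eq)
  also have "\<dots> \<le> measure_pmf.expectation ?M u / 2 powr (-a)"
    by (intro integral_Markov_inequality_measure[where A=UNIV]
          measure_pmf.integrable_const_bound[where B=1])
       (auto simp: u_def abs_prod intro!: prod_nonneg prod_le_1)
  also have "measure_pmf.expectation ?M u =
      (\<Prod>k\<in>I. measure_pmf.expectation (Q k) (\<lambda>b. 1 - (1/2) * indicator {b. g k b} b))"
    unfolding u_def
    by (intro expectation_prod_Pi_pmf[OF fin, THEN trans] prod.cong refl Bochner_Integration.integral_cong
          measure_pmf.integrable_const_bound[where B=1]) (auto simp: indicator_def)
  also have "\<dots> = (\<Prod>k\<in>I. 1 - measure_pmf.prob (Q k) {b. g k b} / 2)"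
    by (simp add: Bochner_Integration.integral_diff measure_pmf.integrable_const_bound[where B=1])
  also have "\<dots> \<le> (\<Prod>k\<in>I. exp (- measure_pmf.prob (Q k) {b. g k b} / 2))"
  proof (intro prod_mono conjI)
    fix k
    show "0 \<le> 1 - measure_pmf.prob (Q k) {b. g k b} / 2"
      using measure_pmf.prob_le_1[of "Q k" "{b. g k b}"] by linarith
    show "1 - measure_pmf.prob (Q k) {b. g k b} / 2 \<le> exp (- measure_pmf.prob (Q k) {b. g k b} / 2)"
      using exp_ge_add_one_self[of "- measure_pmf.prob (Q k) {b. g k b} / 2"] by simp
  qed
  also have "\<dots> = exp (-(\<Sum>k\<in>I. measure_pmf.prob (Q k) {b. g k b}) / 2)"
    using fin by (simp add: exp_sum[symmetric] sum_divide_distrib sum_negf)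
  finally show ?thesis
    by (simp add: X_def powr_minus_divide divide_simps mult.commute)
qed

lemma Pi_pmf_pair_pmf:
  assumes fin: "finite A"
  shows "Pi_pmf A (d1, d2) (\<lambda>x. pair_pmf (p x) (q x)) =
     map_pmf (\<lambda>(f, g) x. if x \<in> A then (f x, g x) else (d1, d2)) (pair_pmf (Pi_pmf A d1 p) (Pi_pmf A d2 q))"
proof -
  have "Pi_pmf A (d1, d2) (\<lambda>x. pair_pmf (p x) (q x)) =
      Pi_pmf A (d1, d2) (\<lambda>x. bind_pmf (p x) (\<lambda>a. bind_pmf (q x) (\<lambda>b. return_pmf (a, b))))"
    by (simp add: pair_pmf_def)
  also have "\<dots> = bind_pmf (Pi_pmf A d1 p) (\<lambda>f. Pi_pmf A (d1, d2) (\<lambda>x. bind_pmf (q x) (\<lambda>b. return_pmf (f x, b))))"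
    by (rule Pi_pmf_bind[OF fin])
  also have "\<dots> = bind_pmf (Pi_pmf A d1 p) (\<lambda>f. bind_pmf (Pi_pmf A d2 q)
      (\<lambda>g. Pi_pmf A (d1, d2) (\<lambda>x. return_pmf (f x, g x))))"
    by (intro bind_pmf_cong refl Pi_pmf_bind[OF fin])
  also have "\<dots> = map_pmf (\<lambda>(f, g) x. if x \<in> A then (f x, g x) else (d1, d2))
      (pair_pmf (Pi_pmf A d1 p) (Pi_pmf A d2 q))"
    using fin by (simp add: pair_pmf_def map_bind_pmf map_return_pmf)
  finally show ?thesis .
qed

definition swap_where :: "('k \<Rightarrow> bool) \<Rightarrow> ('k \<Rightarrow> 'b \<times> 'b) \<Rightarrow> 'k \<Rightarrow> 'b \<times> 'b" where
  "swap_where \<sigma> W = (\<lambda>k. if \<sigma> k then prod.swap (W k) else W k)"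

lemma swap_where_swap_where [simp]: "swap_where \<sigma> (swap_where \<sigma> W) = W"
  by (auto simp: swap_where_def fun_eq_iff)

lemma map_pmf_swap_where_Pi_pmf:
  assumes fin: "finite A" and sym: "\<And>x a b. pmf (R x) (a, b) = pmf (R x) (b, a)"
  shows "map_pmf (swap_where \<sigma>) (Pi_pmf A (d, d) R) = Pi_pmf A (d, d) R"
proof (rule pmf_eqI)
  fix W
  have inj: "inj (swap_where \<sigma>)" by (metis injI swap_where_swap_where)
  have dflt: "swap_where \<sigma> W x = (d, d) \<longleftrightarrow> W x = (d, d)" for x
    by (cases "W x") (auto simp: swap_where_def)
  have factor: "pmf (R x) (swap_where \<sigma> W x) = pmf (R x) (W x)" for x
    using sym[of x "fst (W x)" "snd (W x)"] by (cases "W x") (simp add: swap_where_def)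
  have "pmf (map_pmf (swap_where \<sigma>) (Pi_pmf A (d, d) R)) W
      = pmf (map_pmf (swap_where \<sigma>) (Pi_pmf A (d, d) R)) (swap_where \<sigma> (swap_where \<sigma> W))"
    by simp
  also have "\<dots> = pmf (Pi_pmf A (d, d) R) (swap_where \<sigma> W)"
    by (rule pmf_map_inj'[OF inj])
  also have "\<dots> = pmf (Pi_pmf A (d, d) R) W"
    unfolding pmf_Pi[OF fin] dflt factor ..
  finally show "pmf (map_pmf (swap_where \<sigma>) (Pi_pmf A (d, d) R)) W = pmf (Pi_pmf A (d, d) R) W" .
qed

text \<open>If \<open>M\<close> is invariant under every \<open>\<phi> \<sigma>\<close>, then \<open>M(B)\<close> is the average over a random \<open>\<sigma>\<close>
  of the probability that \<open>\<phi> \<sigma> W \<in> B\<close>, so a bound on the latter for each fixed \<open>W\<close> suffices.\<close>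
lemma prob_le_of_invariant_transforms:
  fixes M :: "'a pmf" and \<Sigma> :: "'s pmf"
  assumes inv: "\<And>\<sigma>. map_pmf (\<phi> \<sigma>) M = M"
  assumes bnd: "\<And>W. W \<in> set_pmf M \<Longrightarrow> measure_pmf.prob \<Sigma> {\<sigma>. \<phi> \<sigma> W \<in> B} \<le> \<beta>"
  shows "measure_pmf.prob M B \<le> \<beta>"
proof -
  have "measure_pmf.prob M B = measure_pmf.expectation \<Sigma> (\<lambda>\<sigma>. measure_pmf.prob (map_pmf (\<phi> \<sigma>) M) B)"
    by (simp add: inv)
  also have "\<dots> = measure_pmf.prob (pair_pmf \<Sigma> M) {(\<sigma>, W). \<phi> \<sigma> W \<in> B}"
    by (simp add: prob_pair_pmf vimage_def)
  also have "\<dots> = measure_pmf.prob (pair_pmf M \<Sigma>) {(W, \<sigma>). \<phi> \<sigma> W \<in> B}"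
    by (subst pair_commute_pmf) (simp add: vimage_def case_prod_unfold)
  also have "\<dots> = measure_pmf.expectation M (\<lambda>W. measure_pmf.prob \<Sigma> {\<sigma>. \<phi> \<sigma> W \<in> B})"
    by (simp add: prob_pair_pmf)
  also have "\<dots> \<le> measure_pmf.expectation M (\<lambda>W. \<beta>)"
    by (intro integral_mono_AE measure_pmf.integrable_const measure_pmf.integrable_const_bound[where B=1]
          AE_pmfI bnd) auto
  finally show ?thesis by simp
qed

lemma prob_bernoulli_half_if:
  "measure_pmf.prob (bernoulli_pmf (1/2)) {b. if b then P else Q}
     = ((if P then 1 else 0) + (if Q then 1 else 0)) / (2::real)"
proof -
  have "{b. if b then P else Q} = (if P then {True} else {}) \<union> (if Q then {False} else {})"
    by auto
  thus ?thesis by (cases P; cases Q) (simp_all add: measure_pmf_single UNIV_bool[symmetric])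
qed

lemma prob_random_swap_imbalance_le:
  fixes e :: "'k \<Rightarrow> bool \<times> bool"
  assumes fin: "finite I" and t: "0 \<le> t"
  shows "measure_pmf.prob (Pi_pmf I False (\<lambda>_. bernoulli_pmf (1/2)))
     {\<sigma>. (\<Sum>k\<in>I. if (if \<sigma> k then snd (e k) else fst (e k)) then 1 else 0::real) \<le> t \<and>
          2 * t \<le> (\<Sum>k\<in>I. if (if \<sigma> k then fst (e k) else snd (e k)) then 1 else 0::real)}
     \<le> exp (- t / 18)"
proof -
  let ?\<Sigma> = "Pi_pmf I False (\<lambda>_. bernoulli_pmf (1/2))"
  define F where "F \<sigma> = (\<Sum>k\<in>I. if (if \<sigma> k then snd (e k) else fst (e k)) then 1 else 0::real)" for \<sigma>
  define G where "G \<sigma> = (\<Sum>k\<in>I. if (if \<sigma> k then fst (e k) else snd (e k)) then 1 else 0::real)" for \<sigma>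
  define T where "T = (\<Sum>k\<in>I. (if fst (e k) then 1 else 0) + (if snd (e k) then 1 else 0::real))"
  have FG: "F \<sigma> + G \<sigma> = T" for \<sigma>
    unfolding F_def G_def T_def sum.distrib[symmetric] by (intro sum.cong) auto
  have F0: "0 \<le> F \<sigma>" for \<sigma> unfolding F_def by (intro sum_nonneg) auto
  show ?thesis
  proof (cases "T < 2 * t")
    case True
    have "\<not> (F \<sigma> \<le> t \<and> 2 * t \<le> G \<sigma>)" for \<sigma> using FG[of \<sigma>] F0[of \<sigma>] True by linarith
    hence empty: "{\<sigma>. F \<sigma> \<le> t \<and> 2 * t \<le> G \<sigma>} = {}" by blast
    show ?thesis unfolding F_def[symmetric] G_def[symmetric] empty by simp
  next
    case False
    \<comment> \<open>Since \<open>F + G = T\<close>, the event forces \<open>F \<le> a\<close>; the choice of \<open>a\<close> makes the exponent below work.\<close>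
    define a where "a = (if 3 * t \<le> T then t else T - 2 * t)"
    have a0: "0 \<le> a" using False t by (auto simp: a_def)
    have "measure_pmf.prob ?\<Sigma> {\<sigma>. F \<sigma> \<le> t \<and> 2 * t \<le> G \<sigma>} \<le> measure_pmf.prob ?\<Sigma> {\<sigma>. F \<sigma> \<le> a}"
    proof (intro measure_pmf.finite_measure_mono subsetI)
      fix \<sigma> assume "\<sigma> \<in> {\<sigma>. F \<sigma> \<le> t \<and> 2 * t \<le> G \<sigma>}"
      thus "\<sigma> \<in> {\<sigma>. F \<sigma> \<le> a}" using FG[of \<sigma>] by (auto simp: a_def)
    qed simp
    also have "\<dots> \<le> 2 powr a * exp (- (\<Sum>k\<in>I. measure_pmf.prob (bernoulli_pmf (1/2))
        {b. if b then snd (e k) else fst (e k)}) / 2)"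
      unfolding F_def by (rule prob_Pi_pmf_count_le[OF fin])
    also have "(\<Sum>k\<in>I. measure_pmf.prob (bernoulli_pmf (1/2)) {b. if b then snd (e k) else fst (e k)}) = T / 2"
      unfolding T_def prob_bernoulli_half_if by (simp add: sum_divide_distrib add.commute)
    also have "2 powr a * exp (- (T / 2) / 2) \<le> exp (25/36 * a) * exp (- T / 4)"
      using a0 by (intro mult_mono two_powr_le_exp) auto
    also have "\<dots> \<le> exp (- t / 18)"
      unfolding exp_add[symmetric] using False by (auto simp: a_def field_simps)
    finally show ?thesis unfolding F_def G_def .
  qed
qed


section \<open>The Sauer--Shelah lemma\<close>

definition shattered_by :: "'a set set \<Rightarrow> 'a set \<Rightarrow> bool" where
  "shattered_by F S \<longleftrightarrow> (\<lambda>A. A \<inter> S) ` F = Pow S"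

lemma shattered_by_image_Diff:
  assumes "x \<notin> S"
  shows "shattered_by ((\<lambda>A. A - {x}) ` F) S \<longleftrightarrow> shattered_by F S"
proof -
  have "(\<lambda>A. A \<inter> S) ` (\<lambda>A. A - {x}) ` F = (\<lambda>A. A \<inter> S) ` F"
    unfolding image_image using assms by (intro image_cong) auto
  thus ?thesis by (simp add: shattered_by_def)
qed

lemma shattered_by_insert:
  assumes x: "x \<notin> S" and sh: "shattered_by {A \<in> F. x \<notin> A \<and> insert x A \<in> F} S"
  shows "shattered_by F (insert x S)"
  unfolding shattered_by_def
proof (intro equalityI subsetI)
  fix T assume "T \<in> Pow (insert x S)"
  hence T: "T \<subseteq> insert x S" by simp
  have "T - {x} \<in> (\<lambda>A. A \<inter> S) ` {A \<in> F. x \<notin> A \<and> insert x A \<in> F}"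
    using sh T unfolding shattered_by_def by auto
  then obtain B where B: "B \<in> F" "x \<notin> B" "insert x B \<in> F" "B \<inter> S = T - {x}"
    by auto
  show "T \<in> (\<lambda>A. A \<inter> insert x S) ` F"
  proof (cases "x \<in> T")
    case True
    with B T x have "insert x B \<inter> insert x S = T" by auto
    with B(3) show ?thesis by blast
  next
    case False
    with B T x have "B \<inter> insert x S = T" by auto
    with B(1) show ?thesis by blast
  qed
qed auto

lemma card_eq_card_image_Diff_plus:
  assumes "finite F"
  shows "card F = card ((\<lambda>A. A - {x}) ` F) + card {A \<in> F. x \<notin> A \<and> insert x A \<in> F}"
proof -
  define F0 where "F0 = {A \<in> F. x \<notin> A}"
  define F1 where "F1 = (\<lambda>A. A - {x}) ` {A \<in> F. x \<in> A}"
  have "card F = card F0 + card {A \<in> F. x \<in> A}"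
    unfolding F0_def using assms by (subst card_Un_disjoint[symmetric]) (auto intro: arg_cong[where f=card])
  also have "card {A \<in> F. x \<in> A} = card F1"
    unfolding F1_def by (rule card_image[symmetric]) (auto simp: inj_on_def)
  also have "card F0 + card F1 = card (F0 \<union> F1) + card (F0 \<inter> F1)"
    using assms by (intro card_Un_Int) (auto simp: F0_def F1_def)
  also have "F0 \<union> F1 = (\<lambda>A. A - {x}) ` F"
  proof -
    have "(\<lambda>A. A - {x}) ` F0 = (\<lambda>A. A) ` F0"
      unfolding F0_def by (intro image_cong refl) simp
    hence "(\<lambda>A. A - {x}) ` F0 = F0" by (simp only: image_ident)
    moreover have "(\<lambda>A. A - {x}) ` F = (\<lambda>A. A - {x}) ` F0 \<union> F1"
      unfolding F0_def F1_def image_Un[symmetric] by (intro arg_cong[where f="image _"]) blast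
    ultimately show ?thesis by simp
  qed
  also have "F0 \<inter> F1 = {A \<in> F. x \<notin> A \<and> insert x A \<in> F}"
  proof (intro set_eqI iffI)
    fix A assume "A \<in> F0 \<inter> F1"
    then obtain B where "A \<in> F" "x \<notin> A" "B \<in> F" "x \<in> B" "A = B - {x}"
      by (auto simp: F0_def F1_def)
    moreover from this have "insert x A = B" by auto
    ultimately show "A \<in> {A \<in> F. x \<notin> A \<and> insert x A \<in> F}" by auto
  next
    fix A assume A: "A \<in> {A \<in> F. x \<notin> A \<and> insert x A \<in> F}"
    hence "A = insert x A - {x}" by auto
    with A show "A \<in> F0 \<inter> F1" unfolding F0_def F1_def by blast
  qed
  finally show ?thesis .
qed

lemma card_shattered_insert_ge:
  assumes fin: "finite P" and x: "x \<notin> P"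
  shows "card {S. S \<subseteq> P \<and> shattered_by ((\<lambda>A. A - {x}) ` F) S}
       + card {S. S \<subseteq> P \<and> shattered_by {A \<in> F. x \<notin> A \<and> insert x A \<in> F} S}
     \<le> card {S. S \<subseteq> insert x P \<and> shattered_by F S}"
proof -
  let ?S' = "{S. S \<subseteq> P \<and> shattered_by ((\<lambda>A. A - {x}) ` F) S}"
    and ?SD = "{S. S \<subseteq> P \<and> shattered_by {A \<in> F. x \<notin> A \<and> insert x A \<in> F} S}"
  have xS: "x \<notin> S" if "S \<subseteq> P" for S using that x by auto
  have "inj_on (insert x) ?SD"
  proof (rule inj_onI)
    fix A B assume A: "A \<in> ?SD" and B: "B \<in> ?SD" and eq: "insert x A = insert x B"
    have "A = insert x A - {x}" using xS A by simp
    also have "\<dots> = B" unfolding eq using xS B by simp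
    finally show "A = B" .
  qed
  hence "card (insert x ` ?SD) = card ?SD" by (rule card_image)
  moreover have "?S' \<inter> insert x ` ?SD = {}" using x by auto
  ultimately have "card ?S' + card ?SD = card (?S' \<union> insert x ` ?SD)"
    using fin by (simp add: card_Un_disjoint)
  also have "\<dots> \<le> card {S. S \<subseteq> insert x P \<and> shattered_by F S}"
  proof (intro card_mono Un_least subsetI)
    show "finite {S. S \<subseteq> insert x P \<and> shattered_by F S}" using fin by simp
  next
    fix S assume "S \<in> ?S'"
    with xS show "S \<in> {S. S \<subseteq> insert x P \<and> shattered_by F S}"
      by (auto simp: shattered_by_image_Diff)
  next
    fix S assume "S \<in> insert x ` ?SD"
    with xS show "S \<in> {S. S \<subseteq> insert x P \<and> shattered_by F S}"
      by (auto intro: shattered_by_insert)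
  qed
  finally show ?thesis .
qed

lemma card_le_card_shattered:
  assumes "finite P" "F \<subseteq> Pow P"
  shows "card F \<le> card {S. S \<subseteq> P \<and> shattered_by F S}"
  using assms
proof (induction P arbitrary: F rule: finite_induct)
  case empty
  show ?case
  proof (cases "F = {}")
    case False
    with empty have F: "F = {{}}" by auto
    have "F \<subseteq> {S. S \<subseteq> {} \<and> shattered_by F S}" unfolding F by (simp add: shattered_by_def)
    moreover have "finite {S. S \<subseteq> {} \<and> shattered_by F S}"
      by (rule finite_subset[of _ "Pow {}"]) auto
    ultimately show ?thesis by (rule card_mono[rotated])
  qed simp
next
  case (insert x P)
  have "finite F"
    using insert.prems insert.hyps(1) by (meson finite_Pow_iff finite_insert rev_finite_subset)
  hence "card F = card ((\<lambda>A. A - {x}) ` F) + card {A \<in> F. x \<notin> A \<and> insert x A \<in> F}"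
    by (rule card_eq_card_image_Diff_plus)
  also have "\<dots> \<le> card {S. S \<subseteq> P \<and> shattered_by ((\<lambda>A. A - {x}) ` F) S}
      + card {S. S \<subseteq> P \<and> shattered_by {A \<in> F. x \<notin> A \<and> insert x A \<in> F} S}"
    using insert.prems insert.hyps(2) by (intro add_mono insert.IH) auto
  also have "\<dots> \<le> card {S. S \<subseteq> insert x P \<and> shattered_by F S}"
    using insert.hyps by (rule card_shattered_insert_ge)
  finally show ?case .
qed

lemma card_subsets_card_le:
  assumes "finite P"
  shows "card {S. S \<subseteq> P \<and> card S \<le> k} = (\<Sum>j\<le>k. card P choose j)"
proof -
  have "{S. S \<subseteq> P \<and> card S \<le> k} = (\<Union>j\<le>k. {S. S \<subseteq> P \<and> card S = j})" by auto
  hence "card {S. S \<subseteq> P \<and> card S \<le> k} = (\<Sum>j\<le>k. card {S. S \<subseteq> P \<and> card S = j})"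
    using assms by (simp only:) (intro card_UN_disjoint, auto intro: rev_finite_subset[of "Pow P"])
  also have "\<dots> = (\<Sum>j\<le>k. card P choose j)" using assms by (simp add: n_subsets)
  finally show ?thesis .
qed

lemma finite_cube: "finite (cube d)"
proof -
  have "cube d = {xs. set xs \<subseteq> {-1, 1} \<and> length xs = d}" by (auto simp: cube_def)
  thus ?thesis using finite_lists_length_eq[of "{-1, 1::int}" d] by simp
qed

lemma card_le_VC:
  assumes "shatters d H S"
  shows "card S \<le> VC d H"
proof -
  have "bdd_above {card S | S. shatters d H S}"
    by (rule bdd_aboveI[of _ "card (cube d)"]) (auto simp: shatters_def intro: card_mono[OF finite_cube])
  thus ?thesis unfolding VC_def using assms by (intro cSup_upper) auto
qed

lemma card_traces_le_sum_binomial: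
  assumes fin: "finite P" and P: "P \<subseteq> cube d"
  shows "card ((\<lambda>f. {x \<in> P. f x = 1}) ` H) \<le> (\<Sum>j\<le>VC d H. card P choose j)"
proof -
  let ?Tr = "(\<lambda>f. {x \<in> P. f x = 1}) ` H"
  have "card ?Tr \<le> card {S. S \<subseteq> P \<and> shattered_by ?Tr S}"
    using fin by (intro card_le_card_shattered) auto
  also have "\<dots> \<le> card {S. S \<subseteq> P \<and> card S \<le> VC d H}"
  proof (intro card_mono subsetI)
    fix S assume S: "S \<in> {S. S \<subseteq> P \<and> shattered_by ?Tr S}"
    have "shatters d H S"
      unfolding shatters_def
    proof (intro conjI allI impI)
      show "S \<subseteq> cube d" using S P by auto
      fix T assume "T \<subseteq> S"
      with S have "T \<in> (\<lambda>A. A \<inter> S) ` ?Tr" unfolding shattered_by_def by auto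
      then obtain f where "f \<in> H" "T = {x \<in> P. f x = 1} \<inter> S" by auto
      thus "\<exists>h\<in>H. \<forall>x\<in>S. (h x = 1) = (x \<in> T)" using S by auto
    qed
    thus "S \<in> {S. S \<subseteq> P \<and> card S \<le> VC d H}" using S card_le_VC by blast
  qed (use fin in auto)
  also have "\<dots> = (\<Sum>j\<le>VC d H. card P choose j)" by (rule card_subsets_card_le[OF fin])
  finally show ?thesis .
qed

lemma sum_binomial_le_exp_power:
  assumes "1 \<le> k" "k \<le> N"
  shows "(\<Sum>j\<le>k. real (N choose j)) \<le> (exp 1 * real N / real k) ^ k"
proof -
  define r where "r = real k / real N"
  have r: "0 < r" "r \<le> 1" using assms by (auto simp: r_def)
  have "(\<Sum>j\<le>k. real (N choose j)) \<le> (\<Sum>j\<le>k. real (N choose j) * r ^ j / r ^ k)"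
  proof (intro sum_mono)
    fix j assume "j \<in> {..k}"
    hence "1 \<le> r ^ j / r ^ k" using r by (simp add: power_decreasing)
    thus "real (N choose j) \<le> real (N choose j) * r ^ j / r ^ k"
      using mult_left_mono[of 1 "r ^ j / r ^ k" "real (N choose j)"] by simp
  qed
  also have "\<dots> \<le> (\<Sum>j\<le>N. real (N choose j) * r ^ j / r ^ k)"
    using assms r by (intro sum_mono2) auto
  also have "\<dots> = (1 + r) ^ N / r ^ k"
    using binomial_ring[of r 1 N] by (simp add: sum_divide_distrib add.commute)
  also have "(1 + r) ^ N \<le> exp (real k)"
    using exp_ge_one_plus_x_over_n_power_n[where x="real k" and n=N] assms by (simp add: r_def)
  also have "exp (real k) / r ^ k = (exp 1 * real N / real k) ^ k"
    using assms by (simp add: r_def power_divide exp_of_nat_mult[symmetric] power_mult_distrib)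
  finally show ?thesis using r by (simp add: divide_right_mono)
qed


section \<open>Samples, errors and error patterns\<close>

definition task_hyps :: "nat \<Rightarrow> (int list \<Rightarrow> int) set \<Rightarrow> nat set \<Rightarrow> nat
    \<Rightarrow> (nat \<Rightarrow> int list \<Rightarrow> int) set" where
  "task_hyps d C V n = {h. \<forall>i<n. h i \<in> restrict_class d C V}"

definition err_count :: "nat \<Rightarrow> nat \<Rightarrow> (nat \<Rightarrow> int list \<Rightarrow> int) \<Rightarrow> (nat \<times> nat \<Rightarrow> int list \<times> int)
    \<Rightarrow> real" where
  "err_count n m h s = (\<Sum>k\<in>{..<n} \<times> {..<m}. if h (fst k) (fst (s k)) \<noteq> snd (s k) then 1 else 0)"

text \<open>\<open>W k\<close> pairs the \<open>k\<close>-th example of the sample with the \<open>k\<close>-th example of the ghost sample;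
  the pattern records which of the two \<open>h\<close> misclassifies.\<close>
definition error_pattern :: "nat \<Rightarrow> nat \<Rightarrow> (nat \<times> nat \<Rightarrow> (int list \<times> int) \<times> (int list \<times> int))
    \<Rightarrow> (nat \<Rightarrow> int list \<Rightarrow> int) \<Rightarrow> nat \<times> nat \<Rightarrow> bool \<times> bool" where
  "error_pattern n m W h = (\<lambda>k. if k \<in> {..<n} \<times> {..<m} then
      (h (fst k) (fst (fst (W k))) \<noteq> snd (fst (W k)), h (fst k) (fst (snd (W k))) \<noteq> snd (snd (W k)))
      else (False, False))"

definition sample_points :: "nat \<Rightarrow> (nat \<times> nat \<Rightarrow> (int list \<times> int) \<times> (int list \<times> int)) \<Rightarrow> nat
    \<Rightarrow> int list set" where
  "sample_points m W i = (\<lambda>j. fst (fst (W (i, j)))) ` {..<m} \<union> (\<lambda>j. fst (snd (W (i, j)))) ` {..<m}"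

definition pattern_of_traces :: "nat \<Rightarrow> nat \<Rightarrow> (nat \<times> nat \<Rightarrow> (int list \<times> int) \<times> (int list \<times> int))
    \<Rightarrow> (nat \<Rightarrow> int list set) \<Rightarrow> nat \<times> nat \<Rightarrow> bool \<times> bool" where
  "pattern_of_traces n m W T = (\<lambda>k. if k \<in> {..<n} \<times> {..<m} then
      ((fst (fst (W k)) \<in> T (fst k)) \<noteq> (snd (fst (W k)) = 1),
       (fst (snd (W k)) \<in> T (fst k)) \<noteq> (snd (snd (W k)) = 1))
      else (False, False))"

lemma card_sample_traces_le:
  assumes W: "\<And>k. k \<in> {..<n} \<times> {..<m} \<Longrightarrow> W k \<in> (cube d \<times> {-1, 1}) \<times> (cube d \<times> {-1, 1})"
    and i: "i < n"
  shows "real (card ((\<lambda>f. {x \<in> sample_points m W i. f x = 1}) ` H)) \<le> (\<Sum>j\<le>VC d H. real (2 * m choose j))"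
proof -
  let ?P = "sample_points m W i"
  have "card ?P \<le> card ((\<lambda>j. fst (fst (W (i, j)))) ` {..<m}) + card ((\<lambda>j. fst (snd (W (i, j)))) ` {..<m})"
    unfolding sample_points_def by (rule card_Un_le)
  also have "\<dots> \<le> 2 * m"
    using card_image_le[of "{..<m}" "\<lambda>j. fst (fst (W (i, j)))"] card_image_le[of "{..<m}" "\<lambda>j. fst (snd (W (i, j)))"]
    by simp
  finally have card: "card ?P \<le> 2 * m" .
  have "?P \<subseteq> cube d" using W i by (force simp: sample_points_def)
  hence "card ((\<lambda>f. {x \<in> ?P. f x = 1}) ` H) \<le> (\<Sum>j\<le>VC d H. card ?P choose j)"
    by (intro card_traces_le_sum_binomial) (simp_all add: sample_points_def)
  hence "real (card ((\<lambda>f. {x \<in> ?P. f x = 1}) ` H)) \<le> (\<Sum>j\<le>VC d H. real (card ?P choose j))"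
    by (simp flip: of_nat_sum)
  also have "\<dots> \<le> (\<Sum>j\<le>VC d H. real (2 * m choose j))"
    using card by (intro sum_mono) (simp add: binomial_right_mono)
  finally show ?thesis .
qed

lemma error_pattern_eq_pattern_of_traces:
  assumes C: "\<forall>f\<in>C. \<forall>x\<in>cube d. f x \<in> {-1, 1}"
  assumes W: "\<And>k. k \<in> {..<n} \<times> {..<m} \<Longrightarrow> W k \<in> (cube d \<times> {-1, 1}) \<times> (cube d \<times> {-1, 1})"
    and h: "h \<in> task_hyps d C V n"
  shows "error_pattern n m W h
     = pattern_of_traces n m W (restrict (\<lambda>i. {x \<in> sample_points m W i. h i x = 1}) {..<n})"
proof
  fix k
  show "error_pattern n m W h k
      = pattern_of_traces n m W (restrict (\<lambda>i. {x \<in> sample_points m W i. h i x = 1}) {..<n}) k"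
  proof (cases "k \<in> {..<n} \<times> {..<m}")
    case True
    obtain i j where k: "k = (i, j)" "i < n" "j < m" using True by auto
    obtain x1 y1 x2 y2 where Wk: "W k = ((x1, y1), (x2, y2))" by (metis prod.exhaust)
    have mem: "x1 \<in> cube d" "x2 \<in> cube d" "y1 \<in> {-1, 1}" "y2 \<in> {-1, 1}" using W[OF True] Wk by auto
    have "h i \<in> C" using h k by (auto simp: task_hyps_def restrict_class_def)
    hence "h i x1 \<in> {-1, 1}" "h i x2 \<in> {-1, 1}" using C mem by auto
    moreover have "x1 \<in> sample_points m W i" "x2 \<in> sample_points m W i"
      using Wk k unfolding sample_points_def by (auto intro!: image_eqI[of _ _ j])
    ultimately show ?thesis using mem k Wk by (auto simp: error_pattern_def pattern_of_traces_def)
  qed (simp add: error_pattern_def pattern_of_traces_def)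
qed

lemma card_error_patterns_le:
  assumes C: "\<forall>f\<in>C. \<forall>x\<in>cube d. f x \<in> {-1, 1}"
  assumes W: "\<And>k. k \<in> {..<n} \<times> {..<m} \<Longrightarrow> W k \<in> (cube d \<times> {-1, 1}) \<times> (cube d \<times> {-1, 1})"
  shows "finite (error_pattern n m W ` task_hyps d C V n) \<and>
         real (card (error_pattern n m W ` task_hyps d C V n))
           \<le> (\<Sum>j\<le>VC d (restrict_class d C V). real (2 * m choose j)) ^ n"
proof -
  define Tr where "Tr i = (\<lambda>f. {x \<in> sample_points m W i. f x = 1}) ` restrict_class d C V" for i
  have "finite (Tr i)" for i
    by (rule finite_subset[of _ "Pow (sample_points m W i)"]) (auto simp: Tr_def sample_points_def)
  hence finPi: "finite (PiE {..<n} Tr)" by (intro finite_PiE) auto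
  have cardTr: "real (card (Tr i)) \<le> (\<Sum>j\<le>VC d (restrict_class d C V). real (2 * m choose j))"
    if "i < n" for i
    unfolding Tr_def by (rule card_sample_traces_le[OF W that])
  have sub: "error_pattern n m W ` task_hyps d C V n \<subseteq> pattern_of_traces n m W ` PiE {..<n} Tr"
  proof
    fix e assume "e \<in> error_pattern n m W ` task_hyps d C V n"
    then obtain h where h: "h \<in> task_hyps d C V n" "e = error_pattern n m W h" by auto
    hence "e = pattern_of_traces n m W (restrict (\<lambda>i. {x \<in> sample_points m W i. h i x = 1}) {..<n})"
      using error_pattern_eq_pattern_of_traces[OF C W] by simp
    moreover have "restrict (\<lambda>i. {x \<in> sample_points m W i. h i x = 1}) {..<n} \<in> PiE {..<n} Tr"
      using h(1) by (auto simp: Tr_def task_hyps_def)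
    ultimately show "e \<in> pattern_of_traces n m W ` PiE {..<n} Tr" by (rule image_eqI)
  qed
  have "card (error_pattern n m W ` task_hyps d C V n) \<le> card (pattern_of_traces n m W ` PiE {..<n} Tr)"
    by (rule card_mono[OF finite_imageI[OF finPi] sub])
  also have "\<dots> \<le> card (PiE {..<n} Tr)" by (rule card_image_le[OF finPi])
  finally have "real (card (error_pattern n m W ` task_hyps d C V n)) \<le> (\<Prod>i<n. real (card (Tr i)))"
    by (simp add: card_PiE flip: of_nat_prod)
  also have "\<dots> \<le> (\<Sum>j\<le>VC d (restrict_class d C V). real (2 * m choose j)) ^ n"
    using prod_mono[of "{..<n}" "\<lambda>i. real (card (Tr i))" "\<lambda>_. \<Sum>j\<le>VC d (restrict_class d C V). real (2 * m choose j)"]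
      cardTr by simp
  finally show ?thesis using finite_subset[OF sub finite_imageI[OF finPi]] by simp
qed

lemma emp_err_eq_err_count: "emp_err n m h s = err_count n m h s / (real n * real m)"
  unfolding emp_err_def err_count_def by (simp add: sum.cartesian_product case_prod_unfold)

lemma sample_pmf_eq: "sample_pmf n m D = Pi_pmf ({..<n} \<times> {..<m}) ([], 0) (\<lambda>k. D (fst k))"
  unfolding sample_pmf_def by (simp add: case_prod_unfold)

lemma sample_pmf_valued:
  assumes "\<forall>i<n. set_pmf (D i) \<subseteq> cube d \<times> {-1, 1}"
    and "s \<in> set_pmf (sample_pmf n m D)" and "k \<in> {..<n} \<times> {..<m}"
  shows "s k \<in> cube d \<times> {-1, 1}"
proof -
  have "s \<in> PiE_dflt ({..<n} \<times> {..<m}) ([], 0) (set_pmf \<circ> (\<lambda>k. D (fst k)))"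
    using assms(2) by (simp add: sample_pmf_eq set_Pi_pmf)
  thus ?thesis using assms(1,3) by (auto simp: PiE_dflt_def)
qed

lemma err_count_cong:
  assumes valid: "\<forall>i<n. set_pmf (D i) \<subseteq> cube d \<times> {-1, 1}" and s: "s \<in> set_pmf (sample_pmf n m D)"
    and hg: "\<forall>i<n. \<forall>x\<in>cube d. h i x = g i x"
  shows "err_count n m h s = err_count n m g s"
  unfolding err_count_def
  using hg sample_pmf_valued[OF valid s] by (intro sum.cong) (auto simp: mem_Times_iff)

lemma pop_err_cong:
  assumes valid: "\<forall>i<n. set_pmf (D i) \<subseteq> cube d \<times> {-1, 1}" and hg: "\<forall>i<n. \<forall>x\<in>cube d. h i x = g i x"
  shows "pop_err n D h = pop_err n D g"
  unfolding pop_err_def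
proof (intro arg_cong[where f="\<lambda>x. 1 / real n * x"] sum.cong refl)
  fix i assume i: "i \<in> {..<n}"
  have "set_pmf (D i) \<subseteq> cube d \<times> {-1, 1}" using valid i by auto
  hence "{(x, y). h i x \<noteq> y} \<inter> set_pmf (D i) = {(x, y). g i x \<noteq> y} \<inter> set_pmf (D i)"
    using hg i by auto
  thus "measure_pmf.prob (D i) {(x, y). h i x \<noteq> y} = measure_pmf.prob (D i) {(x, y). g i x \<noteq> y}"
    by (metis measure_Int_set_pmf)
qed

lemma sum_prob_err_eq:
  assumes "n > 0"
  shows "(\<Sum>k\<in>{..<n} \<times> {..<m}. measure_pmf.prob (D (fst k)) {b. h (fst k) (fst b) \<noteq> snd b})
     = real m * real n * pop_err n D h"
proof -
  have "(\<Sum>k\<in>{..<n} \<times> {..<m}. measure_pmf.prob (D (fst k)) {b. h (fst k) (fst b) \<noteq> snd b})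
     = (\<Sum>i<n. \<Sum>j<m. measure_pmf.prob (D i) {b. h i (fst b) \<noteq> snd b})"
    by (simp only: sum.cartesian_product) (simp add: case_prod_unfold)
  also have "\<dots> = real m * (\<Sum>i<n. measure_pmf.prob (D i) {(x, y). h i x \<noteq> y})"
    by (simp add: sum_distrib_left case_prod_unfold)
  finally show ?thesis using assms by (simp add: pop_err_def)
qed

lemma prob_err_count_le:
  assumes "n > 0" "0 \<le> a"
  shows "measure_pmf.prob (sample_pmf n m D) {s. err_count n m h s \<le> a}
     \<le> exp (25/36 * a - real m * real n * pop_err n D h / 2)"
proof -
  have "measure_pmf.prob (sample_pmf n m D) {s. err_count n m h s \<le> a}
      \<le> 2 powr a * exp (-(\<Sum>k\<in>{..<n} \<times> {..<m}. measure_pmf.prob (D (fst k)) {b. h (fst k) (fst b) \<noteq> snd b}) / 2)"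
    unfolding sample_pmf_eq err_count_def by (rule prob_Pi_pmf_count_le) simp
  also have "\<dots> \<le> exp (25/36 * a) * exp (- (real m * real n * pop_err n D h) / 2)"
    unfolding sum_prob_err_eq[OF assms(1)] using assms(2) by (intro mult_right_mono two_powr_le_exp) auto
  finally show ?thesis by (simp add: exp_add[symmetric])
qed

lemma prob_err_count_ge_half:
  assumes n: "n > 0" and t: "2 \<le> t" and pop: "4 * t \<le> real m * real n * pop_err n D h"
  shows "1/2 \<le> measure_pmf.prob (sample_pmf n m D) {s. 2 * t \<le> err_count n m h s}"
proof -
  let ?S = "sample_pmf n m D"
  have "measure_pmf.prob ?S {s. err_count n m h s < 2 * t} \<le> measure_pmf.prob ?S {s. err_count n m h s \<le> 2 * t}"
    by (intro measure_pmf.finite_measure_mono) auto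
  also have "\<dots> \<le> exp (25/36 * (2 * t) - real m * real n * pop_err n D h / 2)"
    using n t by (intro prob_err_count_le) auto
  also have "\<dots> \<le> exp (- 1)" using pop t by simp
  also have "\<dots> \<le> 1/2"
    using exp_ge_add_one_self[of 1] by (simp add: exp_minus field_simps)
  finally show ?thesis
    using measure_pmf.prob_compl[of "{s. err_count n m h s < 2 * t}" ?S]
    by (simp add: Compl_eq_Diff_UNIV[symmetric] not_less Collect_neg_eq[symmetric])
qed


section \<open>The ghost sample\<close>

definition bad_set :: "(nat \<Rightarrow> int list \<Rightarrow> int) set \<Rightarrow> nat \<Rightarrow> nat \<Rightarrow> (nat \<Rightarrow> (int list \<times> int) pmf)
    \<Rightarrow> real \<Rightarrow> real \<Rightarrow> (nat \<times> nat \<Rightarrow> int list \<times> int) set" where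
  "bad_set H n m D \<epsilon> t = {s. \<exists>h\<in>H. err_count n m h s \<le> t \<and> 4 * \<epsilon> \<le> pop_err n D h}"

definition ghost_pmf :: "nat \<Rightarrow> nat \<Rightarrow> (nat \<Rightarrow> (int list \<times> int) pmf)
    \<Rightarrow> (nat \<times> nat \<Rightarrow> (int list \<times> int) \<times> (int list \<times> int)) pmf" where
  "ghost_pmf n m D = Pi_pmf ({..<n} \<times> {..<m}) (([], 0), ([], 0)) (\<lambda>k. pair_pmf (D (fst k)) (D (fst k)))"

definition ghost_bad_set :: "(nat \<Rightarrow> int list \<Rightarrow> int) set \<Rightarrow> nat \<Rightarrow> nat \<Rightarrow> real
    \<Rightarrow> (nat \<times> nat \<Rightarrow> (int list \<times> int) \<times> (int list \<times> int)) set" where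
  "ghost_bad_set H n m t =
     {W. \<exists>h\<in>H. err_count n m h (fst \<circ> W) \<le> t \<and> 2 * t \<le> err_count n m h (snd \<circ> W)}"

lemma ghost_pmf_valued:
  assumes "\<forall>i<n. set_pmf (D i) \<subseteq> cube d \<times> {-1, 1}"
    and "W \<in> set_pmf (ghost_pmf n m D)" and "k \<in> {..<n} \<times> {..<m}"
  shows "W k \<in> (cube d \<times> {-1, 1}) \<times> (cube d \<times> {-1, 1})"
proof -
  have "W \<in> PiE_dflt ({..<n} \<times> {..<m}) (([], 0), ([], 0)) (set_pmf \<circ> (\<lambda>k. pair_pmf (D (fst k)) (D (fst k))))"
    using assms(2) by (simp add: ghost_pmf_def set_Pi_pmf)
  hence "W k \<in> set_pmf (D (fst k)) \<times> set_pmf (D (fst k))" using assms(3) by (cases k) (auto simp: PiE_dflt_def)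
  moreover have "set_pmf (D (fst k)) \<subseteq> cube d \<times> {-1, 1}" using assms(1,3) by (simp add: mem_Times_iff)
  ultimately show ?thesis by (auto simp: mem_Times_iff)
qed

lemma prob_bad_set_le_ghost:
  assumes n: "n > 0" and m: "m > 0" and t: "t = \<epsilon> * real n * real m" and t2: "2 \<le> t"
  shows "measure_pmf.prob (sample_pmf n m D) (bad_set H n m D \<epsilon> t)
     \<le> 2 * measure_pmf.prob (ghost_pmf n m D) (ghost_bad_set H n m t)"
proof -
  let ?S = "sample_pmf n m D"
  define comb where "comb = (\<lambda>(f, g) k. if k \<in> {..<n} \<times> {..<m} then (f k, g k)
      else ((([]::int list), (0::int)), (([]::int list), (0::int))))"
  have ghost: "ghost_pmf n m D = map_pmf comb (pair_pmf ?S ?S)"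
    unfolding ghost_pmf_def sample_pmf_eq comb_def by (rule Pi_pmf_pair_pmf) simp
  have count_comb: "err_count n m h (fst \<circ> comb (Z, Z')) = err_count n m h Z"
      "err_count n m h (snd \<circ> comb (Z, Z')) = err_count n m h Z'" for h Z Z'
    unfolding err_count_def comb_def by (auto intro: sum.cong)
  have "measure_pmf.expectation ?S (\<lambda>Z. 1/2 * indicator (bad_set H n m D \<epsilon> t) Z)
      \<le> measure_pmf.expectation ?S (\<lambda>Z. measure_pmf.prob ?S {Z'. (Z, Z') \<in> comb -` ghost_bad_set H n m t})"
  proof (intro integral_mono measure_pmf.integrable_const_bound[where B=1])
    fix Z
    show "1/2 * indicator (bad_set H n m D \<epsilon> t) Z \<le> measure_pmf.prob ?S {Z'. (Z, Z') \<in> comb -` ghost_bad_set H n m t}"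
    proof (cases "Z \<in> bad_set H n m D \<epsilon> t")
      case True
      then obtain h where h: "h \<in> H" "err_count n m h Z \<le> t" "4 * \<epsilon> \<le> pop_err n D h"
        by (auto simp: bad_set_def)
      have "4 * t \<le> real m * real n * pop_err n D h"
        using mult_left_mono[OF h(3), of "real m * real n"] t by (simp add: mult_ac)
      hence "1/2 \<le> measure_pmf.prob ?S {s. 2 * t \<le> err_count n m h s}"
        by (intro prob_err_count_ge_half n t2)
      also have "\<dots> \<le> measure_pmf.prob ?S {Z'. (Z, Z') \<in> comb -` ghost_bad_set H n m t}"
        using h by (intro measure_pmf.finite_measure_mono) (auto simp: ghost_bad_set_def count_comb)
      finally show ?thesis using True by simp
    qed simp
  qed (auto simp: measure_pmf.prob_le_1 indicator_def)
  also have "\<dots> = measure_pmf.prob (ghost_pmf n m D) (ghost_bad_set H n m t)"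
    by (simp add: ghost prob_pair_pmf vimage_def)
  finally show ?thesis by simp
qed

lemma prob_ghost_bad_set_le:
  assumes C: "\<forall>f\<in>C. \<forall>x\<in>cube d. f x \<in> {-1, 1}"
  assumes valid: "\<forall>i<n. set_pmf (D i) \<subseteq> cube d \<times> {-1, 1}"
  assumes t: "0 \<le> t"
  shows "measure_pmf.prob (ghost_pmf n m D) (ghost_bad_set (task_hyps d C V n) n m t)
     \<le> (\<Sum>j\<le>VC d (restrict_class d C V). real (2 * m choose j)) ^ n * exp (- t / 18)"
proof (rule prob_le_of_invariant_transforms[where \<phi>=swap_where
      and \<Sigma>="Pi_pmf ({..<n} \<times> {..<m}) False (\<lambda>_. bernoulli_pmf (1/2))"])
  fix \<sigma> :: "nat \<times> nat \<Rightarrow> bool"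
  show "map_pmf (swap_where \<sigma>) (ghost_pmf n m D) = ghost_pmf n m D"
    unfolding ghost_pmf_def by (rule map_pmf_swap_where_Pi_pmf) (simp_all add: pmf_pair mult.commute)
next
  fix W assume W: "W \<in> set_pmf (ghost_pmf n m D)"
  define I where "I = {..<n} \<times> {..<m}"
  let ?\<Sigma> = "Pi_pmf I False (\<lambda>_. bernoulli_pmf (1/2))"
  let ?B = "(\<Sum>j\<le>VC d (restrict_class d C V). real (2 * m choose j)) ^ n"
  define F where "F e \<sigma> = (\<Sum>k\<in>I. if (if \<sigma> k then snd (e k) else fst (e k)) then 1 else 0::real)"
    for e :: "nat \<times> nat \<Rightarrow> bool \<times> bool" and \<sigma>
  define G where "G e \<sigma> = (\<Sum>k\<in>I. if (if \<sigma> k then fst (e k) else snd (e k)) then 1 else 0::real)"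
    for e :: "nat \<times> nat \<Rightarrow> bool \<times> bool" and \<sigma>
  define Pats where "Pats = error_pattern n m W ` task_hyps d C V n"
  have Pats: "finite Pats" "real (card Pats) \<le> ?B"
    unfolding Pats_def using card_error_patterns_le[OF C ghost_pmf_valued[OF valid W]] by auto
  have count_swap: "err_count n m h (fst \<circ> swap_where \<sigma> W) = F (error_pattern n m W h) \<sigma>"
      "err_count n m h (snd \<circ> swap_where \<sigma> W) = G (error_pattern n m W h) \<sigma>" for h \<sigma>
    unfolding err_count_def F_def G_def I_def
    by (auto intro!: sum.cong simp: swap_where_def error_pattern_def)
  have "measure_pmf.prob ?\<Sigma> {\<sigma>. swap_where \<sigma> W \<in> ghost_bad_set (task_hyps d C V n) n m t}
      \<le> measure_pmf.prob ?\<Sigma> (\<Union>e\<in>Pats. {\<sigma>. F e \<sigma> \<le> t \<and> 2 * t \<le> G e \<sigma>})"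
    by (intro measure_pmf.finite_measure_mono) (auto simp: ghost_bad_set_def count_swap Pats_def)
  also have "\<dots> \<le> (\<Sum>e\<in>Pats. measure_pmf.prob ?\<Sigma> {\<sigma>. F e \<sigma> \<le> t \<and> 2 * t \<le> G e \<sigma>})"
    using Pats by (intro measure_pmf.finite_measure_subadditive_finite) auto
  also have "\<dots> \<le> (\<Sum>e\<in>Pats. exp (- t / 18))"
    unfolding F_def G_def I_def by (intro sum_mono prob_random_swap_imbalance_le t) auto
  also have "\<dots> \<le> ?B * exp (- t / 18)"
    using Pats by (simp add: mult_right_mono)
  finally show "measure_pmf.prob (Pi_pmf ({..<n} \<times> {..<m}) False (\<lambda>_. bernoulli_pmf (1/2)))
      {\<sigma>. swap_where \<sigma> W \<in> ghost_bad_set (task_hyps d C V n) n m t} \<le> ?B * exp (- t / 18)"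
    unfolding I_def .
qed


section \<open>Classes of VC dimension zero\<close>

lemma restrict_class_constant_if_VC_0:
  assumes C: "\<forall>f\<in>C. \<forall>x\<in>cube d. f x \<in> {-1, 1}" and vc: "VC d (restrict_class d C V) = 0"
    and f: "f \<in> restrict_class d C V" and g: "g \<in> restrict_class d C V" and x: "x \<in> cube d"
  shows "f x = g x"
proof (rule ccontr)
  assume ne: "f x \<noteq> g x"
  have "f x \<in> {-1, 1}" "g x \<in> {-1, 1}" using C f g x by (auto simp: restrict_class_def)
  with ne have one: "f x = 1 \<and> g x \<noteq> 1 \<or> g x = 1 \<and> f x \<noteq> 1" by auto
  have "shatters d (restrict_class d C V) {x}"
    unfolding shatters_def
  proof (intro conjI allI impI)
    fix T assume "T \<subseteq> {x}"
    hence "T = {} \<or> T = {x}" by auto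
    with one f g show "\<exists>h\<in>restrict_class d C V. \<forall>y\<in>{x}. (h y = 1) = (y \<in> T)" by auto
  qed (use x in simp)
  hence "card {x} \<le> VC d (restrict_class d C V)" by (rule card_le_VC)
  with vc show False by simp
qed

lemma prob_bad_set_le_if_VC_0:
  assumes C: "\<forall>f\<in>C. \<forall>x\<in>cube d. f x \<in> {-1, 1}"
  assumes valid: "\<forall>i<n. set_pmf (D i) \<subseteq> cube d \<times> {-1, 1}"
  assumes vc: "VC d (restrict_class d C V) = 0" and n: "n > 0" and e: "0 < \<epsilon>"
  shows "measure_pmf.prob (sample_pmf n m D) (bad_set (task_hyps d C V n) n m D \<epsilon> (\<epsilon> * real n * real m))
     \<le> exp (- (\<epsilon> * real n * real m))"
proof (cases "restrict_class d C V = {}")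
  case True
  hence "task_hyps d C V n = {}" using n by (auto simp: task_hyps_def)
  thus ?thesis by (simp add: bad_set_def)
next
  case False
  then obtain f0 where f0: "f0 \<in> restrict_class d C V" by auto
  define t where "t = \<epsilon> * real n * real m"
  let ?S = "sample_pmf n m D" and ?bad = "bad_set (task_hyps d C V n) n m D \<epsilon> t"
  have agree: "\<forall>i<n. \<forall>x\<in>cube d. h i x = f0 x" if "h \<in> task_hyps d C V n" for h
    using restrict_class_constant_if_VC_0[OF C vc _ f0] that by (auto simp: task_hyps_def)
  note count_eq = err_count_cong[OF valid _ agree] and pop_eq = pop_err_cong[OF valid agree]
  show ?thesis
  proof (cases "4 * \<epsilon> \<le> pop_err n D (\<lambda>_. f0)")
    case False
    hence "?bad \<inter> set_pmf ?S = {}" using pop_eq by (auto simp: bad_set_def)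
    thus ?thesis unfolding t_def by (metis measure_Int_set_pmf measure_empty exp_ge_zero)
  next
    case True
    have "measure_pmf.prob ?S ?bad = measure_pmf.prob ?S (?bad \<inter> set_pmf ?S)"
      by (simp add: measure_Int_set_pmf)
    also have "\<dots> \<le> measure_pmf.prob ?S {s. err_count n m (\<lambda>_. f0) s \<le> t}"
      by (intro measure_pmf.finite_measure_mono) (auto simp: bad_set_def count_eq)
    also have "\<dots> \<le> exp (25/36 * t - real m * real n * pop_err n D (\<lambda>_. f0) / 2)"
      using n e by (intro prob_err_count_le) (auto simp: t_def)
    also have "\<dots> \<le> exp (- t)"
    proof -
      have "4 * t \<le> real m * real n * pop_err n D (\<lambda>_. f0)"
        using mult_left_mono[OF True, of "real m * real n"] by (simp add: t_def mult_ac)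
      moreover have "0 \<le> t" using e by (simp add: t_def)
      ultimately show ?thesis by simp
    qed
    finally show ?thesis unfolding t_def .
  qed
qed

section \<open>Sample sizes\<close>

lemma ln_le_linear: "0 < v \<Longrightarrow> ln (v::real) \<le> v / 128 + 7 * ln 2 - 1"
  using ln_le_minus_one[of "v / 128"] ln_realpow[of 2 7] by (simp add: ln_div)

lemma two_thirds_le_ln_inverse:
  assumes "0 < \<epsilon>" "\<epsilon> < 1/2"
  shows "2/3 \<le> ln (1 / (\<epsilon>::real))"
proof -
  have "ln 2 \<le> ln (1 / \<epsilon>)" using assms by (intro ln_mono) (auto simp: field_simps)
  thus ?thesis using ln2_ge_two_thirds by linarith
qed

lemma exp_neg_le_div:
  assumes "0 < \<delta>" "1 \<le> N" "ln (real N) + ln (1 / \<delta>) \<le> s"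
  shows "exp (- s) \<le> \<delta> / real N"
proof -
  have "exp (- s) \<le> exp (ln \<delta> - ln (real N))" using assms by (simp add: ln_div)
  also have "\<dots> = \<delta> / real N" using assms by (simp add: exp_diff)
  finally show ?thesis .
qed

text \<open>Where the sample size condition enters: it beats the growth of the Sauer--Shelah bound.\<close>
lemma sauer_factor_le:
  assumes e: "0 < \<epsilon>" "\<epsilon> < 1/2" and k: "1 \<le> k" and hm: "1000 * real k * ln (1 / \<epsilon>) \<le> \<epsilon> * real m"
  shows "(exp 1 * real (2 * m) / real k) ^ k \<le> exp (\<epsilon> * real m / 36) / 2"
proof -
  define L where "L = ln (1 / \<epsilon>)"
  define v where "v = \<epsilon> * real m / real k"
  have L: "2/3 \<le> L" unfolding L_def using e by (rule two_thirds_le_ln_inverse)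
  have kpos: "0 < real k" using k by simp
  have v: "1000 * L \<le> v" using hm kpos by (simp add: v_def L_def field_simps)
  have vpos: "0 < v" using v L by linarith
  have "real (2 * m) / real k = 2 * v / \<epsilon>" using e kpos by (simp add: v_def field_simps)
  hence ln_factor: "ln (real (2 * m) / real k) = ln 2 + ln v + L"
    unfolding L_def using e vpos by (simp add: ln_div ln_mult)
  have exponent: "1 + ln (real (2 * m) / real k) \<le> v / 36 - ln 2"
    using ln_le_linear[OF vpos] v L ln2_le_25_over_36 unfolding ln_factor by linarith
  define X where "X = real (2 * m) / real k"
  have "0 < real m" using vpos e kpos by (simp add: v_def zero_less_divide_iff zero_less_mult_iff)
  hence "0 < X" using kpos by (simp add: X_def)
  hence "(exp 1 * real (2 * m) / real k) ^ k = exp (1 + ln X) ^ k" by (simp add: X_def exp_add)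
  also have "\<dots> = exp (real k * (1 + ln (real (2 * m) / real k)))"
    by (simp add: X_def exp_of_nat_mult)
  also have "\<dots> \<le> exp (real k * (v / 36 - ln 2))"
    using exponent kpos by simp
  also have "\<dots> \<le> exp (\<epsilon> * real m / 36 - ln 2)"
    using kpos k mult_right_mono[of 1 "real k" "ln 2"] by (simp add: v_def algebra_simps)
  also have "\<dots> = exp (\<epsilon> * real m / 36) / 2" by (simp add: exp_diff)
  finally show ?thesis .
qed

section \<open>The generalization bound\<close>

lemma prob_bad_set_le_if_VC_pos:
  assumes C: "\<forall>f\<in>C. \<forall>x\<in>cube d. f x \<in> {-1, 1}"
  assumes valid: "\<forall>i<n. set_pmf (D i) \<subseteq> cube d \<times> {-1, 1}"
  assumes e: "0 < \<epsilon>" "\<epsilon> < 1/2" and n: "n > 0" and k: "1 \<le> VC d (restrict_class d C V)"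
    and hm: "1000 * real (VC d (restrict_class d C V)) * ln (1 / \<epsilon>) \<le> \<epsilon> * real m"
  shows "measure_pmf.prob (sample_pmf n m D) (bad_set (task_hyps d C V n) n m D \<epsilon> (\<epsilon> * real n * real m))
     \<le> exp (- (\<epsilon> * real n * real m) / 36)"
proof -
  define k where "k = VC d (restrict_class d C V)"
  define t where "t = \<epsilon> * real n * real m"
  have L: "2/3 \<le> ln (1 / \<epsilon>)" using e by (rule two_thirds_le_ln_inverse)
  have "real k * (2/3) \<le> real k * ln (1 / \<epsilon>)" by (intro mult_left_mono L) simp
  hence m: "real k * (2/3) * 1000 \<le> \<epsilon> * real m" using hm unfolding k_def by linarith
  hence m1: "1000 * (2/3) \<le> \<epsilon> * real m" using k unfolding k_def by linarith
  have "1 * (\<epsilon> * real m) \<le> real n * (\<epsilon> * real m)" using n m1 by (intro mult_right_mono) auto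
  hence t2: "2 \<le> t" using m1 by (simp add: t_def mult_ac)
  have m0: "m > 0" using m1 by (auto intro: Nat.gr0I)
  have "\<epsilon> * real m \<le> 1/2 * real m" using e by (intro mult_right_mono) auto
  hence "real k \<le> real (2 * m)" using m by simp
  hence k2m: "k \<le> 2 * m" by (rule of_nat_le_iff[THEN iffD1])
  have "(\<Sum>j\<le>k. real (2 * m choose j)) \<le> (exp 1 * real (2 * m) / real k) ^ k"
    using k k2m unfolding k_def by (rule sum_binomial_le_exp_power)
  also have "\<dots> \<le> exp (\<epsilon> * real m / 36) / 2"
    using e k hm unfolding k_def by (rule sauer_factor_le)
  finally have "(\<Sum>j\<le>k. real (2 * m choose j)) \<le> exp (\<epsilon> * real m / 36) / 2" .
  hence sauer: "(\<Sum>j\<le>k. real (2 * m choose j)) ^ n \<le> (exp (\<epsilon> * real m / 36) / 2) ^ n"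
    by (intro power_mono) (auto intro: sum_nonneg)
  have "measure_pmf.prob (sample_pmf n m D) (bad_set (task_hyps d C V n) n m D \<epsilon> t)
      \<le> 2 * measure_pmf.prob (ghost_pmf n m D) (ghost_bad_set (task_hyps d C V n) n m t)"
    by (rule prob_bad_set_le_ghost[OF n m0 t_def t2])
  also have "\<dots> \<le> 2 * ((\<Sum>j\<le>k. real (2 * m choose j)) ^ n * exp (- t / 18))"
    unfolding k_def using t2 by (intro mult_left_mono prob_ghost_bad_set_le[OF C valid]) auto
  also have "\<dots> \<le> 2 * ((exp (\<epsilon> * real m / 36) / 2) ^ n * exp (- t / 18))"
    using sauer by (intro mult_left_mono mult_right_mono) auto
  also have "\<dots> = exp (t / 36) * exp (- t / 18) * (2 / 2 ^ n)"
    by (simp add: t_def power_divide exp_of_nat_mult[symmetric] mult_ac)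
  also have "\<dots> \<le> exp (t / 36) * exp (- t / 18)"
    using n by (intro mult_left_le) (auto simp: Suc_le_eq self_le_power)
  also have "\<dots> = exp (- t / 36)" by (simp flip: exp_add)
  finally show ?thesis unfolding t_def .
qed

lemma prob_bad_set_le:
  assumes C: "\<forall>f\<in>C. \<forall>x\<in>cube d. f x \<in> {-1, 1}"
  assumes valid: "\<forall>i<n. set_pmf (D i) \<subseteq> cube d \<times> {-1, 1}"
  assumes e: "0 < \<epsilon>" "\<epsilon> < 1/2" and n: "n > 0"
    and hm: "1000 * real (VC d (restrict_class d C V)) * ln (1 / \<epsilon>) \<le> \<epsilon> * real m"
  shows "measure_pmf.prob (sample_pmf n m D) (bad_set (task_hyps d C V n) n m D \<epsilon> (\<epsilon> * real n * real m))
     \<le> exp (- (\<epsilon> * real n * real m) / 36)"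
proof (cases "VC d (restrict_class d C V) = 0")
  case True
  show ?thesis
    using e by (intro order.trans[OF prob_bad_set_le_if_VC_0[OF C valid True n e(1)]]) simp
next
  case False
  with hm show ?thesis by (intro prob_bad_set_le_if_VC_pos[OF C valid e n]) auto
qed

lemma bad_event_subset_UN_bad_set:
  assumes "n > 0" "m > 0"
  shows "bad_event d C \<V> n m \<epsilon> D \<subseteq> (\<Union>V\<in>\<V>. bad_set (task_hyps d C V n) n m D \<epsilon> (\<epsilon> * real n * real m))"
proof
  fix s assume "s \<in> bad_event d C \<V> n m \<epsilon> D"
  then obtain h where h: "\<forall>i<n. h i \<in> C" "(\<Union>i<n. Rel d (h i)) \<in> \<V>" "emp_err n m h s \<le> \<epsilon>"
      "4 * \<epsilon> \<le> pop_err n D h"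
    unfolding bad_event_def by blast
  have "err_count n m h s \<le> \<epsilon> * real n * real m"
    using h(3) assms by (simp add: emp_err_eq_err_count pos_divide_le_eq mult_ac)
  moreover have "h \<in> task_hyps d C (\<Union>i<n. Rel d (h i)) n"
    using h(1) by (auto simp: task_hyps_def restrict_class_def)
  ultimately show "s \<in> (\<Union>V\<in>\<V>. bad_set (task_hyps d C V n) n m D \<epsilon> (\<epsilon> * real n * real m))"
    using h(2,4) by (auto simp: bad_set_def)
qed

lemma delta_gen_D_le:
  assumes C: "\<forall>f\<in>C. \<forall>x\<in>cube d. f x \<in> {-1, 1}"
  assumes fin: "finite \<V>" and ne: "\<V> \<noteq> {}" and D: "D \<in> valid_dists d n"
  assumes e: "0 < \<epsilon>" "\<epsilon> < 1/2" and \<delta>: "0 < \<delta>" "\<delta> < 1" and n: "n > 0" and m: "m > 0"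
    and hm: "1000 * real (VC_coll d C \<V>) * ln (1 / \<epsilon>) / \<epsilon> \<le> real m"
    and hnm: "1000 * (ln (real (card \<V>)) + ln (1 / \<delta>)) / \<epsilon> \<le> real n * real m"
  shows "delta_gen_D d C \<V> n m \<epsilon> D \<le> \<delta>"
proof -
  let ?S = "sample_pmf n m D" and ?bad = "\<lambda>V. bad_set (task_hyps d C V n) n m D \<epsilon> (\<epsilon> * real n * real m)"
  have valid: "\<forall>i<n. set_pmf (D i) \<subseteq> cube d \<times> {-1, 1}" using D by (simp add: valid_dists_def)
  have N: "1 \<le> card \<V>" using fin ne by (simp add: Suc_le_eq card_gt_0_iff)
  have "ln (real (card \<V>)) + ln (1 / \<delta>) \<le> \<epsilon> * real n * real m / 1000"
    using hnm e by (simp add: field_simps)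
  moreover have "0 \<le> ln (real (card \<V>)) + ln (1 / \<delta>)" using N \<delta> by simp
  ultimately have "ln (real (card \<V>)) + ln (1 / \<delta>) \<le> \<epsilon> * real n * real m / 36" by linarith
  hence exp_le: "exp (- (\<epsilon> * real n * real m) / 36) \<le> \<delta> / real (card \<V>)"
    using exp_neg_le_div[OF \<delta>(1) N] by simp
  have "delta_gen_D d C \<V> n m \<epsilon> D \<le> measure_pmf.prob ?S (\<Union>V\<in>\<V>. ?bad V)"
    unfolding delta_gen_D_def using bad_event_subset_UN_bad_set[OF n m]
    by (intro measure_pmf.finite_measure_mono) auto
  also have "\<dots> \<le> (\<Sum>V\<in>\<V>. measure_pmf.prob ?S (?bad V))"
    using fin by (intro measure_pmf.finite_measure_subadditive_finite) auto
  also have "\<dots> \<le> (\<Sum>V\<in>\<V>. \<delta> / real (card \<V>))"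
  proof (intro sum_mono order.trans[OF prob_bad_set_le[OF C valid e n] exp_le])
    fix V assume "V \<in> \<V>"
    hence "VC d (restrict_class d C V) \<le> VC_coll d C \<V>"
      unfolding VC_coll_def using fin by (intro Max_ge) auto
    hence "real (VC d (restrict_class d C V)) * ln (1 / \<epsilon>) \<le> real (VC_coll d C \<V>) * ln (1 / \<epsilon>)"
      using two_thirds_le_ln_inverse[OF e] by (intro mult_right_mono) auto
    moreover have "1000 * real (VC_coll d C \<V>) * ln (1 / \<epsilon>) \<le> \<epsilon> * real m"
      using hm e by (simp add: field_simps)
    ultimately show "1000 * real (VC d (restrict_class d C V)) * ln (1 / \<epsilon>) \<le> \<epsilon> * real m"
      by linarith
  qed
  also have "\<dots> = \<delta>" using N by simp
  finally show ?thesis .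
qed

theorem mainTheorem5:
  "\<exists>c::real. c > 0 \<and>
    (\<forall>(d::nat) (C :: (int list \<Rightarrow> int) set) (\<V> :: nat set set) (\<epsilon>::real) (\<delta>::real) (n::nat) (m::nat).
       (\<forall>f\<in>C. \<forall>x\<in>cube d. f x \<in> {-1, 1}) \<longrightarrow>
       \<V> \<noteq> {} \<longrightarrow> \<V> \<subseteq> Pow {..<d} \<longrightarrow>
       0 < \<epsilon> \<longrightarrow> \<epsilon> < 1/2 \<longrightarrow> 0 < \<delta> \<longrightarrow> \<delta> < 1 \<longrightarrow>
       real m \<ge> c * real (VC_coll d C \<V>) * ln (1/\<epsilon>) / \<epsilon> \<longrightarrow>
       real n * real m \<ge> c * (ln (real (card \<V>)) + ln (1/\<delta>)) / \<epsilon> \<longrightarrow>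
       delta_gen d C \<V> n m \<epsilon> \<le> \<delta>)"
proof (intro exI[of _ "1000::real"] conjI allI impI)
  fix d :: nat and C :: "(int list \<Rightarrow> int) set" and \<V> :: "nat set set" and \<epsilon> \<delta> :: real and n m :: nat
  assume C: "\<forall>f\<in>C. \<forall>x\<in>cube d. f x \<in> {-1, 1}" and ne: "\<V> \<noteq> {}" and sub: "\<V> \<subseteq> Pow {..<d}"
    and e: "0 < \<epsilon>" "\<epsilon> < 1/2" and \<delta>: "0 < \<delta>" "\<delta> < 1"
    and hm: "real m \<ge> 1000 * real (VC_coll d C \<V>) * ln (1/\<epsilon>) / \<epsilon>"
    and hnm: "real n * real m \<ge> 1000 * (ln (real (card \<V>)) + ln (1/\<delta>)) / \<epsilon>"
  have fin: "finite \<V>" using sub by (rule finite_subset) simp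
  have "0 \<le> ln (real (card \<V>))" using fin ne by (simp add: Suc_le_eq card_gt_0_iff)
  moreover have "0 < ln (1 / \<delta>)" using \<delta> by simp
  ultimately have "0 < 1000 * (ln (real (card \<V>)) + ln (1 / \<delta>)) / \<epsilon>" using e by simp
  hence "0 < real n * real m" using hnm by linarith
  hence n: "n > 0" and m: "m > 0" by (auto simp: zero_less_mult_iff)
  have "(\<lambda>_. return_pmf (replicate d 1, 1)) \<in> valid_dists d n"
    by (auto simp: valid_dists_def cube_def)
  hence "valid_dists d n \<noteq> {}" by blast
  thus "delta_gen d C \<V> n m \<epsilon> \<le> \<delta>"
    unfolding delta_gen_def using delta_gen_D_le[OF C fin ne _ e \<delta> n m hm hnm] by (rule cSUP_least)
qed simp

end
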